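(* For each $k$ (indices mod $8g-4$), the arc length of $T_k([P_{k+2},Q_{k+2}])$ is less than half the arc length of $[P_{\sigma(k)},Q_{\sigma(k)}]$, and the arc length of $T_k([P_{k-1},Q_{k-1}])$ is less than half the arc length of $[P_{\sigma(k)+1},Q_{\sigma(k)+1}]$.
   Context: Setting. Fix $g\ge 2$; indices are mod $8g-4$. Let $\mathcal F$ be the regular hyperbolic $(8g-4)$-gon in the unit disk centered at $0$ with all interior angles $\pi/2$, sides labeled $1,\dots,8g-4$ counterclockwise, side $i$ joining vertices $V_i$ and $V_{i+1}$. The complete geodesic extending side $i$ goes from $P_i$ (beyond $V_i$) to $Q_{i+1}$ (beyond $V_{i+1}$) on the unit circle; counterclockwise order $P_1,Q_1,P_2,Q_2,\dots,P_{8g-4},Q_{8g-4}$. $\sigma(i)=4g-i$ ($i$ odd), $\sigma(i)=2-i$ ($i$ even). $T_i$ is the Möbius transformation mapping side $i$ onto side $\sigma(i)$, with isometric circle the geodesic $P_iQ_{i+1}$, mapped onto the geodesic $Q_{\sigma(i)+1}P_{\sigma(i)}$, inside to outside. Arcs $[A,B]$ are counterclockwise from $A$ to $B$. *)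

theory Defs
  imports "HOL-Analysis.Analysis"
begin

text \<open>N = 8g-4. Indices are integers; everything below is N-periodic in the
index (via cis), so "indices mod N" is automatic. The polygon is placed (up to a
rotation, which does not affect arc lengths) so that side i has its midpoint on the
ray of angle phi i = 2 pi i / N; vertex V_i lies on the ray of angle (2i-1) pi / N.
The complete geodesic through side i is the circle orthogonal to the unit circle
with endpoints at angles phi i - alpha (= P_i) and phi i + alpha (= Q_(i+1)),
where sin alpha = sqrt 2 * sin (pi/N) (from cosh r = cos(pi/4)/sin(pi/N) for the
regular N-gon with interior angles pi/2 and cosh r = 1/sin alpha).\<close>

definition NN :: "nat \<Rightarrow> nat" where "NN g = 8*g - 4"

definition phi :: "nat \<Rightarrow> int \<Rightarrow> real" where
  "phi g i = 2 * pi * real_of_int i / real (NN g)"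

definition alpha :: "nat \<Rightarrow> real" where
  "alpha g = arcsin (sqrt 2 * sin (pi / real (NN g)))"

definition Pt :: "nat \<Rightarrow> int \<Rightarrow> complex" where
  "Pt g i = cis (phi g i - alpha g)"

definition Qt :: "nat \<Rightarrow> int \<Rightarrow> complex" where
  "Qt g i = cis (phi g (i - 1) + alpha g)"

definition sigma :: "int \<Rightarrow> int \<Rightarrow> int" where
  "sigma g i = (if odd i then 4 * g - i else 2 - i)"

text \<open>Isometric circle of T_i: the geodesic P_i Q_(i+1), i.e. the Euclidean circle
with centre c_i = cis (phi i) / cos alpha and radius tan alpha.
T_i = (reflection in the line through 0 mapping c_i to c_(sigma i)) composed with
(inversion in the isometric circle); this is the unique disk-preserving Moebius map
with isometric circle P_i Q_(i+1) mapping it onto Q_(sigma i + 1) P_(sigma i).\<close>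

definition ctr :: "nat \<Rightarrow> int \<Rightarrow> complex" where
  "ctr g i = cis (phi g i) / complex_of_real (cos (alpha g))"

definition Tm :: "nat \<Rightarrow> int \<Rightarrow> complex \<Rightarrow> complex" where
  "Tm g i z = cis (phi g i + phi g (sigma (int g) i)) *
      (cnj (ctr g i) + complex_of_real ((tan (alpha g))\<^sup>2) / (z - ctr g i))"

definition ccw_angle :: "complex \<Rightarrow> complex \<Rightarrow> real" where
  "ccw_angle A B = (if Arg (B / A) \<ge> 0 then Arg (B / A) else Arg (B / A) + 2 * pi)"

definition ccw_arc :: "complex \<Rightarrow> complex \<Rightarrow> complex set" where
  "ccw_arc A B = {A * cis t | t. 0 \<le> t \<and> t \<le> ccw_angle A B}"

definition has_arc_length :: "complex set \<Rightarrow> real \<Rightarrow> bool" where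
  "has_arc_length S l \<longleftrightarrow> (\<exists>A. cmod A = 1 \<and> 0 \<le> l \<and> l < 2 * pi \<and>
      S = {A * cis t | t. 0 \<le> t \<and> t \<le> l})"

end

theory Submission
  imports Defs
begin

text \<open>Measure angles from the direction \<open>phi k\<close> of the midpoint of side \<open>k\<close>. Conjugated by a
  Cayley transform, \<open>T\<^sub>k\<close> becomes a dilation of the real line, so on the unit circle it acts as
  \<open>t \<mapsto> phi (\<sigma> k) + pi + 2 arctan (K tan (t/2))\<close> with \<open>K = (1 + cos \<alpha>) / (1 - cos \<alpha>)\<close>.
  With \<open>x = pi/N\<close>, every arc \<open>[P\<^sub>j, Q\<^sub>j]\<close> has angular length \<open>2\<alpha> - 2x\<close>; the arc
  \<open>[P\<^sub>k\<^sub>+\<^sub>2, Q\<^sub>k\<^sub>+\<^sub>2]\<close> is \<open>t \<in> [4x - \<alpha>, 2x + \<alpha>]\<close> and \<open>[P\<^sub>k\<^sub>-\<^sub>1, Q\<^sub>k\<^sub>-\<^sub>1]\<close> is its mirror image.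
  Rewriting \<open>arctan (K tan A)\<close> as \<open>pi/2 - arctan (cot A / K)\<close> and using that \<open>arctan\<close> is
  1-Lipschitz, the image has length at most \<open>2 sin (\<alpha> - x) / (K sin (2x - \<alpha>/2) sin (x + \<alpha>/2))\<close>,
  and an elementary estimate valid for \<open>N \<ge> 12\<close> shows that this is less than \<open>\<alpha> - x\<close>.\<close>

lemma cis_double_arctan: "cis (2 * arctan v) = (1 + \<i> * v) / (1 - \<i> * v)"
proof -
  define w where "w = (1 - \<i> * v) / (1 + \<i> * v)"
  have "1 - \<i> * v \<noteq> 0" "1 + \<i> * v \<noteq> 0" by (simp_all add: complex_eq_iff)
  then have "w \<noteq> 0" unfolding w_def by simp
  have "cis (2 * arctan v) = exp (2 * \<i> * Arctan v)"
    by (simp add: cis_conv_exp Arctan_of_real mult_ac)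
  also have "\<dots> = exp (- Ln w)" by (simp add: Arctan_def w_def)
  also have "\<dots> = inverse w" using \<open>w \<noteq> 0\<close> by (simp add: exp_minus)
  finally show ?thesis by (simp add: w_def)
qed

lemma cis_eq_cayley_tan_half:
  assumes "-pi < t" "t < pi"
  shows "cis t = (1 + \<i> * tan (t / 2)) / (1 - \<i> * tan (t / 2))"
proof -
  have "arctan (tan (t / 2)) = t / 2" using assms by (intro arctan_tan) auto
  then show ?thesis by (metis cis_double_arctan mult_2 field_sum_of_halves)
qed

lemma moebius_cayley:
  fixes c u :: complex
  assumes "c \<noteq> 0" "c \<noteq> 1" "1 - \<i> * u \<noteq> 0" "c * (1 + \<i> * u) \<noteq> 1 - \<i> * u"
  shows "1 / c + (1 - c\<^sup>2) / c\<^sup>2 / ((1 + \<i> * u) / (1 - \<i> * u) - 1 / c)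
       = - ((1 + \<i> * ((1 + c) / (1 - c) * u)) / (1 - \<i> * ((1 + c) / (1 - c) * u)))"
proof -
  define E D where "E = 1 + \<i> * u" and "D = 1 - \<i> * u"
  have "1 - c \<noteq> 0" using assms by simp
  then have "1 + \<i> * ((1 + c) / (1 - c) * u) = (E - c * D) / (1 - c)"
    "1 - \<i> * ((1 + c) / (1 - c) * u) = (D - c * E) / (1 - c)"
    unfolding E_def D_def by (simp_all add: field_simps)
  then have rhs: "(1 + \<i> * ((1 + c) / (1 - c) * u)) / (1 - \<i> * ((1 + c) / (1 - c) * u))
      = (E - c * D) / (D - c * E)"
    using \<open>1 - c \<noteq> 0\<close> by simp
  have "1 / c + (1 - c\<^sup>2) / c\<^sup>2 / (E / D - 1 / c) = - ((E - c * D) / (D - c * E))"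
    using assms unfolding E_def[symmetric] D_def[symmetric]
    by (simp add: field_simps power2_eq_square)
  then show ?thesis unfolding rhs E_def D_def .
qed

text \<open>Under the Cayley parametrisation \<open>cis t = (1 + \<i> tan (t/2)) / (1 - \<i> tan (t/2))\<close> of the
  unit circle, this is the boundary map, in angles from \<open>(-pi, pi)\<close>, of the hyperbolic Moebius
  transformation fixing \<open>\<plusminus>1\<close> that corresponds to the dilation \<open>u \<mapsto> K u\<close> of the real line.\<close>

definition dilation_angle :: "real \<Rightarrow> real \<Rightarrow> real" where
  "dilation_angle K t = 2 * arctan (K * tan (t / 2))"

lemma inversion_cis_eq_dilation_angle:
  fixes C :: real
  assumes "0 < C" "C < 1" "-pi < t" "t < pi"
  shows "1 / of_real C + (1 - of_real C ^ 2) / of_real C ^ 2 / (cis t - 1 / of_real C)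
       = - cis (dilation_angle ((1 + C) / (1 - C)) t)"
proof -
  define u where "u = tan (t / 2)"
  have "of_real C * (1 + \<i> * of_real u) \<noteq> 1 - \<i> * of_real u"
    using assms by (simp add: complex_eq_iff)
  then have "1 / of_real C + (1 - of_real C ^ 2) / of_real C ^ 2 /
        ((1 + \<i> * of_real u) / (1 - \<i> * of_real u) - 1 / of_real C)
      = - ((1 + \<i> * of_real ((1 + C) / (1 - C) * u)) / (1 - \<i> * of_real ((1 + C) / (1 - C) * u)))"
    using assms moebius_cayley[of "of_real C" "of_real u"] by (simp add: complex_eq_iff)
  then show ?thesis
    unfolding dilation_angle_def cis_double_arctan u_def cis_eq_cayley_tan_half[OF assms(3,4)] .
qed

lemma continuous_on_dilation_angle:
  assumes "-pi < s" "t < pi"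
  shows "continuous_on {s..t} (dilation_angle K)"
proof (rule continuous_at_imp_continuous_on, intro ballI)
  fix r assume "r \<in> {s..t}"
  then have "cos (r / 2) \<noteq> 0"
    using assms by (intro order.strict_implies_not_eq[symmetric] cos_gt_zero_pi) auto
  then show "isCont (dilation_angle K) r"
    unfolding dilation_angle_def by (intro continuous_intros) auto
qed

lemma dilation_angle_mono:
  assumes "0 < K" "-pi < s" "s \<le> t" "t < pi"
  shows "dilation_angle K s \<le> dilation_angle K t"
proof -
  have "tan (s / 2) \<le> tan (t / 2)"
  proof (cases "s = t")
    case False
    with assms show ?thesis by (intro less_imp_le tan_monotone) auto
  qed simp
  then show ?thesis
    unfolding dilation_angle_def using assms by (simp add: arctan_le_iff mult_left_mono)
qed

lemma dilation_angle_minus: "dilation_angle K (- t) = - dilation_angle K t"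
  by (simp add: dilation_angle_def arctan_minus)

lemma arctan_diff_le:
  assumes "p \<le> q"
  shows "arctan q - arctan p \<le> q - p"
proof (cases "p = q")
  case False
  with assms have "p < q" by simp
  have "((\<lambda>y. arctan y - y) has_real_derivative inverse (1 + y\<^sup>2) - 1) (at y)" for y
    by (intro DERIV_diff DERIV_arctan DERIV_ident)
  from MVT2[OF \<open>p < q\<close> this] obtain z
    where "(arctan q - q) - (arctan p - p) = (q - p) * (inverse (1 + z\<^sup>2) - 1)"
    by blast
  moreover have "inverse (1 + z\<^sup>2) \<le> 1" by (simp add: inverse_le_1_iff)
  then have "(q - p) * (inverse (1 + z\<^sup>2) - 1) \<le> 0"
    using \<open>p < q\<close> by (intro mult_nonneg_nonpos) auto
  ultimately show ?thesis by linarith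
qed simp

lemma dilation_angle_diff_le:
  assumes "0 < K" "0 < s" "s \<le> t" "t < pi"
  shows "dilation_angle K t - dilation_angle K s \<le> 2 * sin ((t - s) / 2) / (K * sin (s / 2) * sin (t / 2))"
proof -
  have cot: "arctan (K * tan A) = pi / 2 - arctan (cot A / K)" if "0 < A" "A < pi / 2" for A
  proof -
    have "0 < sin A" "0 < cos A" using that by (simp_all add: sin_gt_zero cos_gt_zero_pi)
    then have "0 < K * tan A" "inverse (K * tan A) = cot A / K"
      using \<open>0 < K\<close> by (simp_all add: tan_def cot_def)
    then show ?thesis using arctan_inverse[of "K * tan A"] by simp
  qed
  define A1 A2 where "A1 = s / 2" and "A2 = t / 2"
  have A: "0 < A1" "A1 \<le> A2" "A2 < pi / 2" "0 < sin A1" "0 < sin A2"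
    using assms by (auto simp: A1_def A2_def intro!: sin_gt_zero)
  have cot_diff: "cot A1 - cot A2 = sin (A2 - A1) / (sin A1 * sin A2)"
    using A by (simp add: cot_def sin_diff field_simps)
  have "0 \<le> sin (A2 - A1)" using A by (intro sin_ge_zero) auto
  with A have "0 \<le> cot A1 - cot A2" unfolding cot_diff by simp
  then have "cot A2 \<le> cot A1" by simp
  then have "cot A2 / K \<le> cot A1 / K" using \<open>0 < K\<close> by (simp add: divide_right_mono)
  have "dilation_angle K t - dilation_angle K s = 2 * (arctan (cot A1 / K) - arctan (cot A2 / K))"
    using A cot[of A1] cot[of A2] by (simp add: dilation_angle_def A1_def A2_def)
  also have "\<dots> \<le> 2 * (cot A1 / K - cot A2 / K)"
    using arctan_diff_le[OF \<open>cot A2 / K \<le> cot A1 / K\<close>] by simp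
  also have "\<dots> = 2 * sin ((t - s) / 2) / (K * sin (s / 2) * sin (t / 2))"
    unfolding diff_divide_distrib[symmetric] cot_diff by (simp add: A1_def A2_def diff_divide_distrib)
  finally show ?thesis .
qed

lemma small_angle_bounds:
  fixes x :: real
  assumes "0 < x" "x \<le> pi / 12"
  shows "0 < sin x" "sin x < 1 / 3" "47 / 50 \<le> cos x"
proof -
  have "x < pi / 2" using assms pi_gt_zero by linarith
  then show "0 < sin x" using assms by (simp add: sin_gt_zero2)
  have "sin x \<le> x" using assms by (simp add: sin_x_le_x)
  then show "sin x < 1 / 3" using assms pi_less_4 by simp
  with \<open>0 < sin x\<close> have "(sin x)\<^sup>2 < (1 / 3)\<^sup>2" by (intro power_strict_mono) auto
  then have "(47 / 50)\<^sup>2 \<le> 1 - (sin x)\<^sup>2" by (simp add: power2_eq_square)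
  then have "(47 / 50)\<^sup>2 \<le> (cos x)\<^sup>2" by (simp add: cos_squared_eq)
  moreover have "0 < cos x" using assms \<open>x < pi / 2\<close> by (simp add: cos_gt_zero_pi)
  ultimately show "47 / 50 \<le> cos x" by (meson power2_le_imp_le less_imp_le)
qed

lemma arcsin_sqrt2_sin:
  fixes x :: real
  assumes "0 < x" "x \<le> pi / 12"
  defines "a \<equiv> arcsin (sqrt 2 * sin x)"
  shows "sin a = sqrt 2 * sin x" "(cos a)\<^sup>2 = 1 - 2 * (sin x)\<^sup>2"
    "22 / 25 \<le> cos a" "cos a < 1" "x < a" "a < 2 * x"
proof -
  note small = small_angle_bounds[OF assms(1,2)]
  have "sqrt 2 * sin x < 3 * (1 / 3)"
    using small sqrt2_less_2 by (intro mult_strict_mono) auto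
  then have sq: "\<bar>sqrt 2 * sin x\<bar> \<le> 1" using small by simp
  show "sin a = sqrt 2 * sin x" unfolding a_def using sq by (simp add: abs_le_iff)
  have "(sin x)\<^sup>2 < (1 / 3)\<^sup>2" using small by (intro power_strict_mono) auto
  then have nonneg: "0 \<le> 1 - 2 * (sin x)\<^sup>2" and big: "(22 / 25)\<^sup>2 \<le> 1 - 2 * (sin x)\<^sup>2"
    by (simp_all add: power2_eq_square)
  have ca: "cos a = sqrt (1 - 2 * (sin x)\<^sup>2)"
    unfolding a_def using sq by (subst cos_arcsin) (auto simp: abs_le_iff power_mult_distrib)
  show "(cos a)\<^sup>2 = 1 - 2 * (sin x)\<^sup>2" unfolding ca using nonneg by simp
  show "22 / 25 \<le> cos a" unfolding ca using big by (rule real_le_rsqrt)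
  show "cos a < 1" unfolding ca using small by (intro real_less_lsqrt) simp_all
  have "x < pi / 2" "2 * x \<le> pi / 2" using assms pi_gt_zero by linarith+
  have "sin x < sqrt 2 * sin x" using small by simp
  then have "arcsin (sin x) < a"
    unfolding a_def using small sq by (subst arcsin_less_mono) auto
  then show "x < a" using assms \<open>x < pi / 2\<close> by (simp add: arcsin_sin)
  have "sqrt 2 < 2 * (47 / 50)" by (rule real_less_lsqrt) (simp_all add: power2_eq_square)
  then have "sin x * sqrt 2 < sin x * (2 * cos x)"
    using small by (intro mult_strict_left_mono) auto
  moreover have "sin (2 * x) = sin x * (2 * cos x)" by (simp add: sin_double)
  ultimately have "sqrt 2 * sin x < sin (2 * x)" by (simp add: mult.commute)
  then have "a < arcsin (sin (2 * x))"
    unfolding a_def using sq abs_sin_le_one by (subst arcsin_less_mono) auto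
  then show "a < 2 * x" using assms \<open>2 * x \<le> pi / 2\<close> by (simp add: arcsin_sin)
qed

lemma cos_diff_sub_cos_triple_gt:
  fixes x :: real
  assumes "0 < x" "x \<le> pi / 12"
  defines "a \<equiv> arcsin (sqrt 2 * sin x)"
  defines "C \<equiv> cos a"
  shows "4 * (1 - C) / (1 + C) < cos (a - x) - cos (3 * x)"
proof -
  define s c where "s = sin x" and "c = cos x"
  note small = small_angle_bounds[OF assms(1,2), folded s_def c_def]
  note arc = arcsin_sqrt2_sin[OF assms(1,2), folded a_def C_def s_def]
  \<comment> \<open>Both sides are multiples of \<open>s\<^sup>2\<close>, roughly \<open>2.26 s\<^sup>2\<close> against \<open>3.69 s\<^sup>2\<close>.\<close>
  have s2: "0 < s\<^sup>2" using small by simp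
  have pC: "47 / 25 \<le> 1 + C" using arc by simp
  have oneC: "1 - C = 2 * s\<^sup>2 / (1 + C)"
  proof -
    have "(1 - C) * (1 + C) = 2 * s\<^sup>2" using arc by (simp add: algebra_simps power2_eq_square)
    then show ?thesis using pC by (simp add: field_simps)
  qed
  have "4 * (1 - C) / (1 + C) = 8 * s\<^sup>2 / (1 + C)\<^sup>2"
    unfolding oneC using pC by (simp add: field_simps power2_eq_square)
  also have "\<dots> \<le> 8 * s\<^sup>2 / (47 / 25)\<^sup>2"
    using pC s2 by (intro divide_left_mono power_mono mult_pos_pos) auto
  also have "\<dots> < (1 + 4 * (47 / 50)) * s\<^sup>2 - 1 * (2 * s\<^sup>2 / (47 / 25))"
    using s2 by (simp add: field_simps power2_eq_square)
  also have "\<dots> \<le> (sqrt 2 + 4 * c) * s\<^sup>2 - c * (2 * s\<^sup>2 / (1 + C))"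
  proof -
    have "1 \<le> sqrt 2" by simp
    with small have "1 + 4 * (47 / 50) \<le> sqrt 2 + 4 * c" by linarith
    then have "(1 + 4 * (47 / 50)) * s\<^sup>2 \<le> (sqrt 2 + 4 * c) * s\<^sup>2"
      using s2 by (intro mult_right_mono) auto
    moreover have "c * (2 * s\<^sup>2 / (1 + C)) \<le> 1 * (2 * s\<^sup>2 / (47 / 25))"
      using pC s2 small by (intro mult_mono divide_left_mono) (auto simp: c_def)
    ultimately show ?thesis by linarith
  qed
  also have "\<dots> = cos (a - x) - cos (3 * x)"
  proof -
    have "cos (a - x) = c * C + sqrt 2 * s\<^sup>2"
      using arc by (simp add: cos_diff C_def c_def s_def power2_eq_square mult_ac)
    moreover have "cos (3 * x) = c * (4 * c\<^sup>2 - 3)"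
      unfolding cos_treble_cos c_def by (simp add: power2_eq_square power3_eq_cube algebra_simps)
    then have "cos (3 * x) = c - 4 * c * s\<^sup>2"
      by (simp add: c_def s_def cos_squared_eq algebra_simps)
    ultimately show ?thesis unfolding oneC[symmetric] by (simp add: algebra_simps)
  qed
  finally show ?thesis .
qed

lemma dilation_angle_gap_lt:
  fixes x :: real
  assumes "0 < x" "x \<le> pi / 12"
  defines "a \<equiv> arcsin (sqrt 2 * sin x)"
  defines "C \<equiv> cos a"
  defines "K \<equiv> (1 + C) / (1 - C)"
  shows "dilation_angle K (2 * x + a) - dilation_angle K (4 * x - a) < a - x"
proof -
  note arc = arcsin_sqrt2_sin[OF assms(1,2), folded a_def C_def]
  define P where "P = cos (a - x) - cos (3 * x)"
  have K: "0 < K" "4 * (1 - C) / (1 + C) = 4 / K" using arc by (simp_all add: K_def)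
  have "4 / K < P" unfolding P_def K(2)[symmetric] C_def a_def
    using assms(1,2) by (rule cos_diff_sub_cos_triple_gt)
  then have "2 < K * (P / 2)" using K by (simp add: field_simps)
  have "(4 * x - a) / 2 - (2 * x + a) / 2 = - (a - x)" "(4 * x - a) / 2 + (2 * x + a) / 2 = 3 * x"
    by (simp_all add: field_simps)
  then have sines: "sin ((4 * x - a) / 2) * sin ((2 * x + a) / 2) = P / 2"
    unfolding P_def sin_times_sin by (metis cos_minus)
  have "0 < sin (a - x)" "sin (a - x) \<le> a - x"
    using arc assms pi_gt_zero by (auto intro!: sin_gt_zero sin_x_le_x)
  have "0 < 4 * x - a" "4 * x - a \<le> 2 * x + a" "2 * x + a < pi"
    using arc assms pi_gt_zero by linarith+
  moreover have "(2 * x + a - (4 * x - a)) / 2 = a - x" by simp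
  ultimately have "dilation_angle K (2 * x + a) - dilation_angle K (4 * x - a)
      \<le> 2 * sin (a - x) / (K * (P / 2))"
    using dilation_angle_diff_le[OF \<open>0 < K\<close>, of "4 * x - a" "2 * x + a"]
    by (simp only: sines mult.assoc)
  also have "\<dots> < sin (a - x)"
    using \<open>2 < K * (P / 2)\<close> \<open>0 < sin (a - x)\<close> by (simp add: field_simps)
  finally show ?thesis using \<open>sin (a - x) \<le> a - x\<close> by linarith
qed

lemma has_arc_length_image:
  fixes f :: "complex \<Rightarrow> complex" and h :: "real \<Rightarrow> real"
  assumes "t1 \<le> t2"
    and f: "\<And>t. t1 \<le> t \<Longrightarrow> t \<le> t2 \<Longrightarrow> f (cis (p + t)) = cis (q + h t)"
    and cont: "continuous_on {t1..t2} h"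
    and mono: "\<And>s t. t1 \<le> s \<Longrightarrow> s \<le> t \<Longrightarrow> t \<le> t2 \<Longrightarrow> h s \<le> h t"
    and "h t2 - h t1 < 2 * pi"
  shows "has_arc_length (f ` {cis (p + t1) * cis t | t. 0 \<le> t \<and> t \<le> t2 - t1}) (h t2 - h t1)"
proof -
  define A where "A = cis (q + h t1)"
  have "f ` {cis (p + t1) * cis t | t. 0 \<le> t \<and> t \<le> t2 - t1} = {A * cis s | s. 0 \<le> s \<and> s \<le> h t2 - h t1}"
  proof (intro equalityI subsetI)
    fix z assume "z \<in> f ` {cis (p + t1) * cis t | t. 0 \<le> t \<and> t \<le> t2 - t1}"
    then obtain t where t: "0 \<le> t" "t \<le> t2 - t1" and z: "z = f (cis (p + (t1 + t)))"
      by (auto simp: cis_mult add.assoc)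
    have "z = A * cis (h (t1 + t) - h t1)"
      unfolding z A_def using t by (simp add: f cis_mult)
    moreover have "h t1 \<le> h (t1 + t)" "h (t1 + t) \<le> h t2" using t by (intro mono; simp)+
    ultimately show "z \<in> {A * cis s | s. 0 \<le> s \<and> s \<le> h t2 - h t1}" by auto
  next
    fix z assume "z \<in> {A * cis s | s. 0 \<le> s \<and> s \<le> h t2 - h t1}"
    then obtain s where s: "0 \<le> s" "s \<le> h t2 - h t1" and z: "z = A * cis s" by blast
    obtain t where t: "t1 \<le> t" "t \<le> t2" "h t = h t1 + s"
      using IVT'[of h t1 "h t1 + s" t2] s cont \<open>t1 \<le> t2\<close> by auto
    have "z = f (cis (p + t1) * cis (t - t1))"
      unfolding z A_def using t by (simp add: f cis_mult add.assoc)
    moreover have "cis (p + t1) * cis (t - t1) \<in> {cis (p + t1) * cis t | t. 0 \<le> t \<and> t \<le> t2 - t1}"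
      using t by auto
    ultimately show "z \<in> f ` {cis (p + t1) * cis t | t. 0 \<le> t \<and> t \<le> t2 - t1}" by blast
  qed
  moreover have "0 \<le> h t2 - h t1" using mono[of t1 t2] \<open>t1 \<le> t2\<close> by simp
  ultimately show ?thesis
    unfolding has_arc_length_def using \<open>h t2 - h t1 < 2 * pi\<close> by (auto intro!: exI[of _ A] simp: A_def)
qed

lemma Tm_cis:
  assumes "0 < cos (alpha g)" "cos (alpha g) < 1" "-pi < t" "t < pi"
  shows "Tm g k (cis (phi g k + t)) = cis (phi g (sigma (int g) k) + pi +
    dilation_angle ((1 + cos (alpha g)) / (1 - cos (alpha g))) t)"
proof -
  define C p q where "C = cos (alpha g)" and "p = phi g k" and "q = phi g (sigma (int g) k)"
  have cancel: "c * d * (inverse c / D + T / (c * X)) = d * (1 / D + T / X)"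
    if "c \<noteq> 0" for c d D T X :: complex
    using that by (simp add: field_simps)
  have "complex_of_real ((tan (alpha g))\<^sup>2) = (1 - of_real C ^ 2) / of_real C ^ 2"
    unfolding C_def tan_def by (simp add: power_divide sin_squared_eq)
  moreover have "cnj (ctr g k) = inverse (cis p) / of_real C"
    unfolding ctr_def C_def p_def by (simp add: cis_cnj cis_inverse)
  moreover have "cis (p + t) - ctr g k = cis p * (cis t - 1 / of_real C)"
    unfolding ctr_def C_def p_def by (simp add: cis_mult[symmetric] field_simps)
  ultimately have "Tm g k (cis (p + t)) = cis p * cis q * (inverse (cis p) / of_real C +
      (1 - of_real C ^ 2) / of_real C ^ 2 / (cis p * (cis t - 1 / of_real C)))"
    unfolding Tm_def p_def q_def by (simp add: cis_mult)
  also have "\<dots> = cis q * (1 / of_real C + (1 - of_real C ^ 2) / of_real C ^ 2 / (cis t - 1 / of_real C))"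
    by (rule cancel) simp
  also have "\<dots> = cis q * - cis (dilation_angle ((1 + C) / (1 - C)) t)"
    unfolding C_def inversion_cis_eq_dilation_angle[OF assms] ..
  also have "\<dots> = cis (q + pi + dilation_angle ((1 + C) / (1 - C)) t)"
    by (simp add: cis_mult[symmetric])
  finally show ?thesis unfolding p_def q_def C_def .
qed

lemma has_arc_length_Tm_image:
  assumes "0 < cos (alpha g)" "cos (alpha g) < 1" "-pi < t1" "t1 \<le> t2" "t2 < pi"
  defines "K \<equiv> (1 + cos (alpha g)) / (1 - cos (alpha g))"
  assumes "dilation_angle K t2 - dilation_angle K t1 < 2 * pi"
  shows "has_arc_length (Tm g k ` {cis (phi g k + t1) * cis t | t. 0 \<le> t \<and> t \<le> t2 - t1})
    (dilation_angle K t2 - dilation_angle K t1)"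
proof (rule has_arc_length_image)
  have "0 < K" unfolding K_def using assms(1,2) by simp
  then show "dilation_angle K s \<le> dilation_angle K t" if "t1 \<le> s" "s \<le> t" "t \<le> t2" for s t
    using that assms(3,5) by (intro dilation_angle_mono) auto
qed (use assms in \<open>auto intro: continuous_on_dilation_angle simp: Tm_cis K_def\<close>)

lemma phi_add: "phi g (k + j) = phi g k + 2 * of_int j * (pi / real (NN g))"
  unfolding phi_def by (simp add: add_divide_distrib algebra_simps)

lemma NN_bounds: "g \<ge> 2 \<Longrightarrow> 0 < pi / real (NN g) \<and> pi / real (NN g) \<le> pi / 12"
  unfolding NN_def by (auto simp: field_simps)

lemma ccw_arc_Pt_Qt:
  assumes "g \<ge> 2"
  defines "x \<equiv> pi / real (NN g)"
  shows "ccw_angle (Pt g j) (Qt g j) = 2 * alpha g - 2 * x"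
    "ccw_arc (Pt g j) (Qt g j) = {cis (phi g j - alpha g) * cis t | t. 0 \<le> t \<and> t \<le> 2 * alpha g - 2 * x}"
proof -
  have x: "0 < x" "x \<le> pi / 12" using NN_bounds[OF assms(1)] by (simp_all add: x_def)
  then have "x < alpha g" "alpha g < 2 * x"
    using arcsin_sqrt2_sin(5,6)[OF x] by (simp_all add: alpha_def x_def)
  then have range: "2 * alpha g - 2 * x \<in> {-pi<..pi}" using x pi_gt_zero by auto
  have "phi g (j - 1) = phi g j - 2 * x" using phi_add[of g j "- 1", folded x_def] by simp
  then have "Qt g j / Pt g j = cis (2 * alpha g - 2 * x)"
    unfolding Qt_def Pt_def cis_divide by (simp only:) (simp add: algebra_simps)
  then show angle: "ccw_angle (Pt g j) (Qt g j) = 2 * alpha g - 2 * x"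
    unfolding ccw_angle_def using Arg_cis[OF range] \<open>x < alpha g\<close> by simp
  show "ccw_arc (Pt g j) (Qt g j) = {cis (phi g j - alpha g) * cis t | t. 0 \<le> t \<and> t \<le> 2 * alpha g - 2 * x}"
    unfolding ccw_arc_def angle by (simp only: Pt_def)
qed

lemma has_arc_length_Tm_image_ccw_arc:
  assumes "g \<ge> 2"
  defines "x \<equiv> pi / real (NN g)" and "K \<equiv> (1 + cos (alpha g)) / (1 - cos (alpha g))"
  assumes "phi g j - alpha g = phi g k + t" "-pi < t" "t + (2 * alpha g - 2 * x) < pi"
    and "dilation_angle K (t + (2 * alpha g - 2 * x)) - dilation_angle K t < 2 * pi"
  shows "has_arc_length (Tm g k ` ccw_arc (Pt g j) (Qt g j))
    (dilation_angle K (t + (2 * alpha g - 2 * x)) - dilation_angle K t)"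
proof -
  have x: "0 < x" "x \<le> pi / 12" using NN_bounds[OF assms(1)] by (simp_all add: x_def)
  then have "0 < cos (alpha g)" "cos (alpha g) < 1" "x < alpha g"
    using arcsin_sqrt2_sin(3-5)[OF x] by (simp_all add: alpha_def x_def)
  with assms show ?thesis
    using has_arc_length_Tm_image[of g t "t + (2 * alpha g - 2 * x)" k] ccw_arc_Pt_Qt(2)[OF assms(1), of j]
    by (simp add: x_def K_def)
qed

theorem corollary8p3:
  fixes g :: nat and k :: int
  assumes "g \<ge> 2"
  shows "(\<exists>l. has_arc_length (Tm g k ` ccw_arc (Pt g (k + 2)) (Qt g (k + 2))) l \<and>
            l < ccw_angle (Pt g (sigma (int g) k)) (Qt g (sigma (int g) k)) / 2)
       \<and> (\<exists>l. has_arc_length (Tm g k ` ccw_arc (Pt g (k - 1)) (Qt g (k - 1))) l \<and>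
            l < ccw_angle (Pt g (sigma (int g) k + 1)) (Qt g (sigma (int g) k + 1)) / 2)"
proof -
  define x a K where "x = pi / real (NN g)" and "a = alpha g" and "K = (1 + cos a) / (1 - cos a)"
  define l where "l = dilation_angle K (2 * x + a) - dilation_angle K (4 * x - a)"
  have x: "0 < x" "x \<le> pi / 12" using NN_bounds[OF assms] by (simp_all add: x_def)
  have a: "a = arcsin (sqrt 2 * sin x)" by (simp add: a_def x_def alpha_def)
  have "x < a" "a < 2 * x" using arcsin_sqrt2_sin(5,6)[OF x] by (simp_all add: a)
  have "l < a - x" unfolding l_def K_def a using x by (rule dilation_angle_gap_lt)
  then have "l < 2 * pi" using x \<open>a < 2 * x\<close> pi_gt_zero by linarith
  have half: "ccw_angle (Pt g j) (Qt g j) / 2 = a - x" for j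
    using ccw_arc_Pt_Qt(1)[OF assms] by (simp add: x_def a_def)
  note image = has_arc_length_Tm_image_ccw_arc[OF assms, folded x_def a_def, folded K_def]
  have mirror: "dilation_angle K (- 2 * x - a) = - dilation_angle K (2 * x + a)"
    "dilation_angle K (a - 4 * x) = - dilation_angle K (4 * x - a)"
    using dilation_angle_minus[of K "2 * x + a"] dilation_angle_minus[of K "4 * x - a"] by simp_all
  have "has_arc_length (Tm g k ` ccw_arc (Pt g (k + 2)) (Qt g (k + 2))) l"
    using image[of "k + 2" k "4 * x - a"] phi_add[of g k 2, folded x_def]
      \<open>l < 2 * pi\<close> \<open>x < a\<close> \<open>a < 2 * x\<close> x
    by (simp add: l_def algebra_simps)
  moreover have "has_arc_length (Tm g k ` ccw_arc (Pt g (k - 1)) (Qt g (k - 1))) l"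
    using image[of "k - 1" k "- 2 * x - a"] phi_add[of g k "- 1", folded x_def]
      \<open>l < 2 * pi\<close> \<open>x < a\<close> \<open>a < 2 * x\<close> x mirror
    by (simp add: l_def algebra_simps)
  ultimately show ?thesis using \<open>l < a - x\<close> half by auto
qed

end
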